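(* Let $G=(V,E)$ be an undirected graph having a strongly connected orientation. A strongly connected orientation of $G$ is decreasingly minimal among the strongly connected orientations of $G$ if and only if it is increasingly maximal among them.
   Context: An orientation's in-degree vector is $(\varrho_D(v))_{v\in V}$, $\varrho_D(v)$ the number of arcs with head $v$. Decreasingly minimal: largest in-degree as small as possible within the class, then second largest, etc. Increasingly maximal: smallest in-degree as large as possible within the class, then second smallest, etc. *)

theory Defs
  imports Main "HOL-Library.Multiset"
begin

text \<open>An undirected (multi)graph is given by a finite vertex set V, a finite
edge set E and an endpoint map ep; edge e joins fst (ep e) and snd (ep e).
Parallel edges are allowed (distinct edges may have the same endpoints).\<close>

definition ugraph :: "'v set \<Rightarrow> 'e set \<Rightarrow> ('e \<Rightarrow> 'v \<times> 'v) \<Rightarrow> bool" where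
  "ugraph V E ep \<longleftrightarrow> finite V \<and> finite E \<and>
     (\<forall>e\<in>E. fst (ep e) \<in> V \<and> snd (ep e) \<in> V)"

text \<open>An orientation assigns to every edge a (tail, head) pair, which is
one of the two orderings of its endpoints.\<close>

definition is_orientation :: "'e set \<Rightarrow> ('e \<Rightarrow> 'v \<times> 'v) \<Rightarrow> ('e \<Rightarrow> 'v \<times> 'v) \<Rightarrow> bool" where
  "is_orientation E ep D \<longleftrightarrow> (\<forall>e\<in>E. D e = ep e \<or> D e = prod.swap (ep e))"

definition arcs :: "'e set \<Rightarrow> ('e \<Rightarrow> 'v \<times> 'v) \<Rightarrow> ('v \<times> 'v) set" where
  "arcs E D = D ` E"

definition strongly_connected :: "'v set \<Rightarrow> 'e set \<Rightarrow> ('e \<Rightarrow> 'v \<times> 'v) \<Rightarrow> bool" where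
  "strongly_connected V E D \<longleftrightarrow> (\<forall>u\<in>V. \<forall>v\<in>V. (u, v) \<in> (arcs E D)\<^sup>*)"

definition strong_orientations ::
  "'v set \<Rightarrow> 'e set \<Rightarrow> ('e \<Rightarrow> 'v \<times> 'v) \<Rightarrow> ('e \<Rightarrow> 'v \<times> 'v) set" where
  "strong_orientations V E ep = {D. is_orientation E ep D \<and> strongly_connected V E D}"

definition indeg :: "'e set \<Rightarrow> ('e \<Rightarrow> 'v \<times> 'v) \<Rightarrow> 'v \<Rightarrow> nat" where
  "indeg E D v = card {e \<in> E. snd (D e) = v}"

definition indeg_inc :: "'v set \<Rightarrow> 'e set \<Rightarrow> ('e \<Rightarrow> 'v \<times> 'v) \<Rightarrow> nat list" where
  "indeg_inc V E D = sorted_list_of_multiset (image_mset (indeg E D) (mset_set V))"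

definition indeg_dec :: "'v set \<Rightarrow> 'e set \<Rightarrow> ('e \<Rightarrow> 'v \<times> 'v) \<Rightarrow> nat list" where
  "indeg_dec V E D = rev (indeg_inc V E D)"

definition lex_le :: "nat list \<Rightarrow> nat list \<Rightarrow> bool" where
  "lex_le xs ys \<longleftrightarrow> xs = ys \<or> (xs, ys) \<in> lexord {(a, b). a < b}"

definition dec_min :: "'v set \<Rightarrow> 'e set \<Rightarrow> ('e \<Rightarrow> 'v \<times> 'v) set \<Rightarrow> ('e \<Rightarrow> 'v \<times> 'v) \<Rightarrow> bool" where
  "dec_min V E C D \<longleftrightarrow> D \<in> C \<and> (\<forall>D'\<in>C. lex_le (indeg_dec V E D) (indeg_dec V E D'))"

definition inc_max :: "'v set \<Rightarrow> 'e set \<Rightarrow> ('e \<Rightarrow> 'v \<times> 'v) set \<Rightarrow> ('e \<Rightarrow> 'v \<times> 'v) \<Rightarrow> bool" where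
  "inc_max V E C D \<longleftrightarrow> D \<in> C \<and> (\<forall>D'\<in>C. lex_le (indeg_inc V E D') (indeg_inc V E D))"

end

(*
  Call a strongly connected orientation locally balanced if no strongly connected
  orientation arises from it by moving one unit of in-degree from a vertex a to a
  vertex b with indeg a >= indeg b + 2. Such a move strictly improves both the
  decreasing and the increasing in-degree sequence, so decreasingly minimal and
  increasingly maximal orientations are locally balanced.

  Conversely, let D1 be locally balanced and D2 strongly connected. If D2 has smaller
  in-degree than D1 at u, then reversing a suitable path of D1 moves a unit of
  in-degree from u to a vertex v where D2 has larger in-degree than D1 and keeps the
  orientation strongly connected: it suffices that no tight set (a set entered by a
  single arc of D1) contains u but not v, and submodularity of the in-degree of sets
  provides such a v. Applying this exchange to D2 and to D1, local balance of D1 lets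
  us move D2 towards D1 by unit shifts that never worsen either sorted in-degree
  sequence, so D1 is optimal in both senses.
*)

theory Submission
  imports Defs
begin

section \<open>Sorted in-degree sequences\<close>

definition lex_less :: "'a::linorder list \<Rightarrow> 'a list \<Rightarrow> bool" where
  "lex_less xs ys \<longleftrightarrow> (xs, ys) \<in> lexord {(a, b). a < b}"

lemma lex_le_iff_lex_less: "lex_le xs ys \<longleftrightarrow> xs = ys \<or> lex_less xs ys"
  by (simp add: lex_le_def lex_less_def)

lemma trans_lexord_less: "trans (lexord {(a, b :: 'a::linorder). a < b})"
  by (rule lexord_transI) (auto simp: trans_def)

lemma lex_le_trans: "lex_le xs ys \<Longrightarrow> lex_le ys zs \<Longrightarrow> lex_le xs zs"
  unfolding lex_le_def using trans_lexord_less by (auto dest: transD)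

lemma lex_less_not_lex_le: "lex_less xs ys \<Longrightarrow> \<not> lex_le ys xs"
proof
  assume "lex_less xs ys" "lex_le ys xs"
  then have "(xs, xs) \<in> lexord {(a, b). a < b}"
    unfolding lex_le_iff_lex_less lex_less_def using trans_lexord_less by (auto dest: transD)
  then show False by (simp add: lexord_irreflexive)
qed

lemma sorted_list_of_multiset_split:
  assumes "M = A + B" "\<forall>x\<in>#A. \<forall>y\<in>#B. x \<le> y"
  shows "sorted_list_of_multiset M = sorted_list_of_multiset A @ sorted_list_of_multiset B"
proof -
  let ?xs = "sorted_list_of_multiset A @ sorted_list_of_multiset B"
  have "sorted ?xs" using assms(2) by (simp add: sorted_append)
  then have "sort ?xs = ?xs" by (rule sorted_sort_id)
  then show ?thesis
    by (metis assms(1) mset_append mset_sorted_list_of_multiset sorted_list_of_multiset_mset)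
qed

lemma sorted_list_of_multiset_ConsE:
  assumes "M \<noteq> {#}"
  obtains c xs where "sorted_list_of_multiset M = c # xs" "c \<in># M"
proof -
  have "sorted_list_of_multiset M \<noteq> []"
    using assms by (metis mset.simps(1) mset_sorted_list_of_multiset)
  then show thesis
    using that by (metis list.exhaust list.set_intros(1) set_sorted_list_of_multiset)
qed

lemma rev_sorted_list_of_multiset_ConsE:
  assumes "M \<noteq> {#}"
  obtains c xs where "rev (sorted_list_of_multiset M) = c # xs" "c \<in># M"
proof -
  have "rev (sorted_list_of_multiset M) \<noteq> []"
    using assms by (metis Nil_is_rev_conv mset.simps(1) mset_sorted_list_of_multiset)
  then show thesis
    using that by (metis list.exhaust list.set_intros(1) set_rev set_sorted_list_of_multiset)
qed

lemma lex_less_sorted_list_of_multiset_raise: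
  fixes a :: "'a::linorder"
  assumes "B \<noteq> {#}" "\<forall>x\<in>#A. a < x" "\<forall>x\<in>#B. a < x"
  shows "lex_less (sorted_list_of_multiset (N + add_mset a A)) (sorted_list_of_multiset (N + B))"
proof -
  define Nlo where "Nlo = filter_mset (\<lambda>x. x \<le> a) N"
  define Nhi where "Nhi = filter_mset (\<lambda>x. \<not> x \<le> a) N"
  have N: "N = Nlo + Nhi" unfolding Nlo_def Nhi_def by (rule multiset_partition)
  have "N + add_mset a A = add_mset a Nlo + (Nhi + A)" by (simp add: N)
  then have "sorted_list_of_multiset (N + add_mset a A)
      = sorted_list_of_multiset (add_mset a Nlo) @ sorted_list_of_multiset (Nhi + A)"
    by (rule sorted_list_of_multiset_split) (use assms(2) in \<open>auto simp: Nlo_def Nhi_def\<close>)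
  also have "sorted_list_of_multiset (add_mset a Nlo)
      = sorted_list_of_multiset Nlo @ sorted_list_of_multiset {#a#}"
    by (rule sorted_list_of_multiset_split) (auto simp: Nlo_def)
  finally have lhs: "sorted_list_of_multiset (N + add_mset a A)
      = sorted_list_of_multiset Nlo @ a # sorted_list_of_multiset (Nhi + A)" by simp
  have "N + B = Nlo + (Nhi + B)" by (simp add: N)
  then have rhs: "sorted_list_of_multiset (N + B)
      = sorted_list_of_multiset Nlo @ sorted_list_of_multiset (Nhi + B)"
    by (rule sorted_list_of_multiset_split) (use assms(3) in \<open>auto simp: Nlo_def Nhi_def\<close>)
  have "Nhi + B \<noteq> {#}" using assms(1) by simp
  then obtain c xs where c: "sorted_list_of_multiset (Nhi + B) = c # xs" "c \<in># Nhi + B"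
    by (rule sorted_list_of_multiset_ConsE)
  have "a < c" using c(2) assms(3) by (auto simp: Nhi_def)
  then show ?thesis unfolding lex_less_def lhs rhs c(1) by (simp add: lexord_append_leftI)
qed

lemma lex_less_rev_sorted_list_of_multiset_lower:
  fixes b :: "'a::linorder"
  assumes "B \<noteq> {#}" "\<forall>x\<in>#A. x < b" "\<forall>x\<in>#B. x < b"
  shows "lex_less (rev (sorted_list_of_multiset (N + B)))
                  (rev (sorted_list_of_multiset (N + add_mset b A)))"
proof -
  define Nlo where "Nlo = filter_mset (\<lambda>x. x < b) N"
  define Nhi where "Nhi = filter_mset (\<lambda>x. \<not> x < b) N"
  have N: "N = Nlo + Nhi" unfolding Nlo_def Nhi_def by (rule multiset_partition)
  have "N + add_mset b A = (Nlo + A) + add_mset b Nhi" by (simp add: N)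
  then have "sorted_list_of_multiset (N + add_mset b A)
      = sorted_list_of_multiset (Nlo + A) @ sorted_list_of_multiset (add_mset b Nhi)"
    by (rule sorted_list_of_multiset_split) (use assms(2) in \<open>auto simp: Nlo_def Nhi_def\<close>)
  also have "sorted_list_of_multiset (add_mset b Nhi)
      = sorted_list_of_multiset {#b#} @ sorted_list_of_multiset Nhi"
    by (rule sorted_list_of_multiset_split) (auto simp: Nhi_def)
  finally have lhs: "rev (sorted_list_of_multiset (N + add_mset b A))
      = rev (sorted_list_of_multiset Nhi) @ b # rev (sorted_list_of_multiset (Nlo + A))" by simp
  have "N + B = (Nlo + B) + Nhi" by (simp add: N)
  then have "sorted_list_of_multiset (N + B)
      = sorted_list_of_multiset (Nlo + B) @ sorted_list_of_multiset Nhi"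
    by (rule sorted_list_of_multiset_split) (use assms(3) in \<open>auto simp: Nlo_def Nhi_def\<close>)
  then have rhs: "rev (sorted_list_of_multiset (N + B))
      = rev (sorted_list_of_multiset Nhi) @ rev (sorted_list_of_multiset (Nlo + B))" by simp
  have "Nlo + B \<noteq> {#}" using assms(1) by simp
  then obtain c xs where c: "rev (sorted_list_of_multiset (Nlo + B)) = c # xs" "c \<in># Nlo + B"
    by (rule rev_sorted_list_of_multiset_ConsE)
  have "c < b" using c(2) assms(3) by (auto simp: Nlo_def)
  then show ?thesis unfolding lex_less_def lhs rhs c(1) by (simp add: lexord_append_leftI)
qed

definition unit_shift :: "('a \<Rightarrow> nat) \<Rightarrow> 'a \<Rightarrow> 'a \<Rightarrow> ('a \<Rightarrow> nat) \<Rightarrow> bool" where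
  "unit_shift f a b g \<longleftrightarrow>
     a \<noteq> b \<and> g a + 1 = f a \<and> g b = f b + 1 \<and> (\<forall>w. w \<noteq> a \<longrightarrow> w \<noteq> b \<longrightarrow> g w = f w)"

lemma unit_shiftI:
  assumes "a \<noteq> b" "\<And>w. int (g w) = int (f w) - of_bool (w = a) + of_bool (w = b)"
  shows "unit_shift f a b g"
proof -
  have "int (g a) + 1 = int (f a)" "int (g b) = int (f b) + 1"
    using assms(1) assms(2)[of a] assms(2)[of b] by auto
  moreover have "g w = f w" if "w \<noteq> a" "w \<noteq> b" for w
    using assms(2)[of w] that by simp
  ultimately show ?thesis using assms(1) unfolding unit_shift_def by simp
qed

lemma image_mset_unit_shift:
  assumes "finite V" "a \<in> V" "b \<in> V" "unit_shift f a b g"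
  shows "image_mset f (mset_set V) = image_mset f (mset_set (V - {a, b})) + {#f a, f b#}"
    and "image_mset g (mset_set V) = image_mset f (mset_set (V - {a, b})) + {#f a - 1, f b + 1#}"
proof -
  have ab: "a \<noteq> b" using assms(4) by (simp add: unit_shift_def)
  have "mset_set (insert a (insert b (V - {a, b}))) = mset_set (V - {a, b}) + {#a, b#}"
    using assms(1) ab by simp
  moreover have "insert a (insert b (V - {a, b})) = V" using assms(2,3) by auto
  ultimately have V: "mset_set V = mset_set (V - {a, b}) + {#a, b#}" by simp
  then show "image_mset f (mset_set V) = image_mset f (mset_set (V - {a, b})) + {#f a, f b#}"
    by simp
  have "image_mset g (mset_set (V - {a, b})) = image_mset f (mset_set (V - {a, b}))"
    using assms(1,4) by (intro image_mset_cong) (auto simp: unit_shift_def)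
  with V assms(4) show "image_mset g (mset_set V)
      = image_mset f (mset_set (V - {a, b})) + {#f a - 1, f b + 1#}"
    by (auto simp: unit_shift_def)
qed

lemma sum_diff_unit_shift_less:
  assumes "finite V" "v \<in> V" "unit_shift f v u g" "h v < f v" "f u < h u"
  shows "(\<Sum>x\<in>V. g x - h x) < (\<Sum>x\<in>V. f x - h x)"
proof (rule sum_strict_mono_ex1[OF assms(1)])
  show "\<forall>x\<in>V. g x - h x \<le> f x - h x"
  proof
    fix x
    show "g x - h x \<le> f x - h x"
      using assms(3,5) unfolding unit_shift_def by (cases "x = v"; cases "x = u") auto
  qed
  show "\<exists>x\<in>V. g x - h x < f x - h x"
    using assms(2-4) by (intro bexI[of _ v]) (auto simp: unit_shift_def)
qed

lemma indeg_unit_shift_lex_less: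
  assumes "finite V" "a \<in> V" "b \<in> V" "unit_shift (indeg E D) a b (indeg E D')"
    and "indeg E D b + 2 \<le> indeg E D a"
  shows "lex_less (indeg_inc V E D) (indeg_inc V E D')"
    and "lex_less (indeg_dec V E D') (indeg_dec V E D)"
proof -
  let ?N = "image_mset (indeg E D) (mset_set (V - {a, b}))"
  let ?new = "{#indeg E D a - 1, indeg E D b + 1#}"
  have old: "image_mset (indeg E D) (mset_set V) = ?N + add_mset (indeg E D b) {#indeg E D a#}"
    and old': "image_mset (indeg E D) (mset_set V) = ?N + add_mset (indeg E D a) {#indeg E D b#}"
    using image_mset_unit_shift(1)[OF assms(1-4)] by (simp_all add: add_mset_commute)
  have new: "image_mset (indeg E D') (mset_set V) = ?N + ?new"
    by (rule image_mset_unit_shift(2)[OF assms(1-4)])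
  show "lex_less (indeg_inc V E D) (indeg_inc V E D')"
    unfolding indeg_inc_def old new
    by (rule lex_less_sorted_list_of_multiset_raise) (use assms(5) in auto)
  show "lex_less (indeg_dec V E D') (indeg_dec V E D)"
    unfolding indeg_dec_def indeg_inc_def old' new
    by (rule lex_less_rev_sorted_list_of_multiset_lower) (use assms(5) in auto)
qed

lemma indeg_unit_shift_lex_le:
  assumes "finite V" "a \<in> V" "b \<in> V" "unit_shift (indeg E D) a b (indeg E D')"
    and "indeg E D b + 1 \<le> indeg E D a"
  shows "lex_le (indeg_inc V E D) (indeg_inc V E D')"
    and "lex_le (indeg_dec V E D') (indeg_dec V E D)"
proof -
  have "lex_less (indeg_inc V E D) (indeg_inc V E D')
      \<and> lex_less (indeg_dec V E D') (indeg_dec V E D)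
    \<or> indeg_inc V E D = indeg_inc V E D'"
  proof (cases "indeg E D b + 2 \<le> indeg E D a")
    case True
    then show ?thesis using indeg_unit_shift_lex_less[OF assms(1-4)] by blast
  next
    case False
    then have "indeg E D a = indeg E D b + 1" using assms(5) by simp
    then show ?thesis
      using image_mset_unit_shift[OF assms(1-4)] by (simp add: indeg_inc_def add_mset_commute)
  qed
  then show "lex_le (indeg_inc V E D) (indeg_inc V E D')"
    and "lex_le (indeg_dec V E D') (indeg_dec V E D)"
    unfolding lex_le_iff_lex_less indeg_dec_def by auto
qed

section \<open>In-degrees of vertex sets\<close>

lemma orientation_endpoints:
  assumes "ugraph V E ep" "is_orientation E ep D" "e \<in> E"
  shows "fst (D e) \<in> V" "snd (D e) \<in> V"
  using assms unfolding ugraph_def is_orientation_def by (auto simp: prod.swap_def)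

definition indeg_set :: "'e set \<Rightarrow> ('e \<Rightarrow> 'v \<times> 'v) \<Rightarrow> 'v set \<Rightarrow> nat" where
  "indeg_set E D Z = card {e \<in> E. snd (D e) \<in> Z \<and> fst (D e) \<notin> Z}"

lemma rtrancl_enters_set:
  assumes "(a, b) \<in> r\<^sup>*" "a \<notin> Z" "b \<in> Z"
  obtains c d where "(c, d) \<in> r" "c \<notin> Z" "d \<in> Z"
  using assms by (induction rule: rtrancl_induct) auto

lemma strongly_connected_iff_indeg_set:
  assumes G: "ugraph V E ep" and O: "is_orientation E ep D"
  shows "strongly_connected V E D \<longleftrightarrow> (\<forall>Z. Z \<noteq> {} \<longrightarrow> Z \<subset> V \<longrightarrow> indeg_set E D Z \<noteq> 0)"
proof (intro iffI allI impI)
  fix Z assume S: "strongly_connected V E D" and Z: "Z \<noteq> {}" "Z \<subset> V"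
  obtain z w where "z \<in> Z" "w \<in> V - Z" using Z by blast
  then have "(w, z) \<in> (arcs E D)\<^sup>*" using S Z unfolding strongly_connected_def by blast
  then obtain c d where "(c, d) \<in> arcs E D" "c \<notin> Z" "d \<in> Z"
    using \<open>w \<in> V - Z\<close> \<open>z \<in> Z\<close> by (auto elim: rtrancl_enters_set)
  then obtain e where "e \<in> E" "snd (D e) \<in> Z" "fst (D e) \<notin> Z"
    unfolding arcs_def by (metis fst_conv imageE snd_conv)
  moreover have "finite E" using G by (simp add: ugraph_def)
  ultimately show "indeg_set E D Z \<noteq> 0" unfolding indeg_set_def by auto
next
  assume C: "\<forall>Z. Z \<noteq> {} \<longrightarrow> Z \<subset> V \<longrightarrow> indeg_set E D Z \<noteq> 0"
  show "strongly_connected V E D" unfolding strongly_connected_def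
  proof (intro ballI, rule ccontr)
    fix u v assume "u \<in> V" "v \<in> V" "(u, v) \<notin> (arcs E D)\<^sup>*"
    define Z where "Z = {w \<in> V. (u, w) \<notin> (arcs E D)\<^sup>*}"
    have "Z \<noteq> {}" "Z \<subset> V" using \<open>u \<in> V\<close> \<open>v \<in> V\<close> \<open>(u, v) \<notin> _\<close> unfolding Z_def by auto
    then have "indeg_set E D Z \<noteq> 0" using C by blast
    then have "{e \<in> E. snd (D e) \<in> Z \<and> fst (D e) \<notin> Z} \<noteq> {}"
      unfolding indeg_set_def by (metis card.empty)
    then obtain e where e: "e \<in> E" "snd (D e) \<in> Z" "fst (D e) \<notin> Z" by blast
    have "(u, fst (D e)) \<in> (arcs E D)\<^sup>*"
      using e(3) orientation_endpoints[OF G O e(1)] unfolding Z_def by blast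
    moreover have "(fst (D e), snd (D e)) \<in> arcs E D" using e(1) unfolding arcs_def by force
    ultimately have "(u, snd (D e)) \<in> (arcs E D)\<^sup>*" by (rule rtrancl_into_rtrancl)
    then show False using e(2) unfolding Z_def by blast
  qed
qed

lemma indeg_set_submodular:
  assumes "finite E"
  shows "indeg_set E D (A \<inter> B) + indeg_set E D (A \<union> B) \<le> indeg_set E D A + indeg_set E D B"
proof -
  have count: "indeg_set E D Z = (\<Sum>e\<in>E. of_bool (snd (D e) \<in> Z \<and> fst (D e) \<notin> Z))" for Z
    unfolding indeg_set_def using assms by (simp add: sum.If_cases Int_def)
  show ?thesis unfolding count sum.distrib[symmetric] by (rule sum_mono) auto
qed

lemma sum_indeg_eq_card:
  assumes "finite E" "finite M"
  shows "(\<Sum>w\<in>M. indeg E D w) = card {e \<in> E. snd (D e) \<in> M}"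
proof -
  have "{e \<in> E. snd (D e) \<in> M} = (\<Union>w\<in>M. {e \<in> E. snd (D e) = w})" by auto
  moreover have "card (\<Union>w\<in>M. {e \<in> E. snd (D e) = w}) = (\<Sum>w\<in>M. card {e \<in> E. snd (D e) = w})"
    using assms by (intro card_UN_disjoint) auto
  ultimately show ?thesis unfolding indeg_def by simp
qed

lemma sum_indeg_total:
  assumes "ugraph V E ep" "is_orientation E ep D"
  shows "(\<Sum>w\<in>V. indeg E D w) = card E"
proof -
  have "{e \<in> E. snd (D e) \<in> V} = E" using orientation_endpoints[OF assms] by auto
  then show ?thesis using assms(1) sum_indeg_eq_card[of E V D] by (simp add: ugraph_def)
qed

text \<open>An edge with its head in M is either spanned by M, which does not depend on the
  orientation, or enters M.\<close>

lemma sum_indeg_eq_inner_plus_indeg_set: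
  assumes "finite E" "finite M" "is_orientation E ep D"
  shows "(\<Sum>w\<in>M. indeg E D w)
    = card {e \<in> E. fst (ep e) \<in> M \<and> snd (ep e) \<in> M} + indeg_set E D M"
proof -
  have "{e \<in> E. snd (D e) \<in> M}
      = {e \<in> E. fst (ep e) \<in> M \<and> snd (ep e) \<in> M} \<union> {e \<in> E. snd (D e) \<in> M \<and> fst (D e) \<notin> M}"
    and "{e \<in> E. fst (ep e) \<in> M \<and> snd (ep e) \<in> M} \<inter> {e \<in> E. snd (D e) \<in> M \<and> fst (D e) \<notin> M} = {}"
    using assms(3) unfolding is_orientation_def by (auto simp: prod.swap_def)
  then show ?thesis
    using assms(1,2) by (simp add: sum_indeg_eq_card indeg_set_def card_Un_disjoint)
qed

lemma sum_indeg_le_if_indeg_set_le: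
  assumes "finite E" "finite M" "is_orientation E ep D1" "is_orientation E ep D2"
    and "indeg_set E D1 M \<le> indeg_set E D2 M"
  shows "(\<Sum>w\<in>M. indeg E D1 w) \<le> (\<Sum>w\<in>M. indeg E D2 w)"
  using assms sum_indeg_eq_inner_plus_indeg_set[of E M ep] by simp

lemma sum_indeg_le_iff_compl:
  assumes "ugraph V E ep" "is_orientation E ep D1" "is_orientation E ep D2" "S \<subseteq> V"
  shows "(\<Sum>w\<in>S. indeg E D1 w) \<le> (\<Sum>w\<in>S. indeg E D2 w) \<longleftrightarrow>
         (\<Sum>w\<in>V - S. indeg E D2 w) \<le> (\<Sum>w\<in>V - S. indeg E D1 w)"
proof -
  have "finite V" using assms(1) by (simp add: ugraph_def)
  then have "(\<Sum>w\<in>V. indeg E D w) = (\<Sum>w\<in>V - S. indeg E D w) + (\<Sum>w\<in>S. indeg E D w)" for D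
    using assms(4) by (metis sum.subset_diff)
  from this[of D1] this[of D2] show ?thesis
    using sum_indeg_total[OF assms(1,2)] sum_indeg_total[OF assms(1,3)] by linarith
qed

definition tight :: "'v set \<Rightarrow> 'e set \<Rightarrow> ('e \<Rightarrow> 'v \<times> 'v) \<Rightarrow> 'v set \<Rightarrow> bool" where
  "tight V E D A \<longleftrightarrow> A \<noteq> {} \<and> A \<subset> V \<and> indeg_set E D A = 1"

lemma tight_Int:
  assumes G: "ugraph V E ep" and D: "D \<in> strong_orientations V E ep"
    and "tight V E D A" "tight V E D B" "A \<inter> B \<noteq> {}" "A \<union> B \<noteq> V"
  shows "tight V E D (A \<inter> B)"
proof -
  have pos: "indeg_set E D Z \<noteq> 0" if "Z \<noteq> {}" "Z \<subset> V" for Z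
    using D that strongly_connected_iff_indeg_set[OF G] unfolding strong_orientations_def by blast
  have "indeg_set E D (A \<inter> B) + indeg_set E D (A \<union> B) \<le> 2"
    using indeg_set_submodular[of E D A B] assms(3,4) G by (simp add: tight_def ugraph_def)
  moreover have "A \<inter> B \<subset> V" "A \<union> B \<subset> V" "A \<union> B \<noteq> {}"
    using assms(3-6) by (auto simp: tight_def)
  then have "indeg_set E D (A \<inter> B) \<noteq> 0" "indeg_set E D (A \<union> B) \<noteq> 0"
    using pos assms(5) by auto
  ultimately show ?thesis using assms(3-5) by (auto simp: tight_def)
qed

section \<open>Reversing paths\<close>

fun walk :: "'e set \<Rightarrow> ('e \<Rightarrow> 'v \<times> 'v) \<Rightarrow> 'v \<Rightarrow> 'e list \<Rightarrow> 'v \<Rightarrow> bool" where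
  "walk E D a [] b \<longleftrightarrow> a = b"
| "walk E D a (e # es) b \<longleftrightarrow> e \<in> E \<and> fst (D e) = a \<and> walk E D (snd (D e)) es b"

lemma walk_append: "walk E D a (xs @ ys) b \<longleftrightarrow> (\<exists>m. walk E D a xs m \<and> walk E D m ys b)"
  by (induction xs arbitrary: a) auto

lemma walk_subset: "walk E D a es b \<Longrightarrow> set es \<subseteq> E"
  by (induction es arbitrary: a) auto

lemma rtrancl_arcs_imp_walk: "(a, b) \<in> (arcs E D)\<^sup>* \<Longrightarrow> \<exists>es. walk E D a es b"
proof (induction rule: converse_rtrancl_induct)
  case base
  have "walk E D b [] b" by simp
  then show ?case by blast
next
  case (step a c)
  obtain es where "walk E D c es b" using step.IH by blast
  moreover obtain e where "e \<in> E" "D e = (a, c)" using step.hyps(1) unfolding arcs_def by auto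
  ultimately have "walk E D a (e # es) b" by simp
  then show ?case by blast
qed

text \<open>A repeated edge bounds a closed sub-walk, which can be cut out.\<close>

lemma shortest_walk_distinct:
  assumes "walk E D a es b" and shortest: "\<And>es'. walk E D a es' b \<Longrightarrow> length es \<le> length es'"
  shows "distinct es"
proof (rule ccontr)
  assume "\<not> distinct es"
  then obtain xs ys zs y where es: "es = xs @ [y] @ ys @ [y] @ zs"
    using not_distinct_decomp by blast
  then have "walk E D a (xs @ y # ys @ y # zs) b" using assms(1) by simp
  then obtain m where m: "walk E D a xs m" "walk E D m (y # ys @ y # zs) b"
    unfolding walk_append by blast
  then have y: "y \<in> E" "fst (D y) = m" "walk E D (snd (D y)) (ys @ y # zs) b" by auto
  then obtain m' where "walk E D m' (y # zs) b" unfolding walk_append by blast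
  then have "walk E D m (y # zs) b" using y by simp
  with m(1) have "walk E D a (xs @ y # zs) b" unfolding walk_append by blast
  then have "length es \<le> length (xs @ y # zs)" by (rule shortest)
  then show False using es by simp
qed

lemma rtrancl_arcs_imp_distinct_walk:
  assumes "(a, b) \<in> (arcs E D)\<^sup>*"
  obtains es where "walk E D a es b" "distinct es"
proof -
  obtain es0 where "walk E D a es0 b" using rtrancl_arcs_imp_walk[OF assms] by blast
  then obtain es where es: "walk E D a es b"
    "\<forall>es'. walk E D a es' b \<longrightarrow> length es \<le> length es'"
    using ex_has_least_nat[where P = "\<lambda>es. walk E D a es b" and m = length] by blast
  then have "distinct es" by (intro shortest_walk_distinct) auto
  with es(1) show thesis by (rule that)
qed

lemma walk_indeg_balance:
  "walk E D a es b \<Longrightarrow>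
    int (length (filter (\<lambda>e. fst (D e) = w) es)) - int (length (filter (\<lambda>e. snd (D e) = w) es))
    = of_bool (w = a) - of_bool (w = b)"
proof (induction es arbitrary: a)
  case (Cons e es)
  then have "walk E D (snd (D e)) es b" "fst (D e) = a" by auto
  with Cons.IH[OF this(1)] show ?case by (auto simp: of_bool_def)
qed simp

lemma walk_cut_balance:
  "walk E D a es b \<Longrightarrow>
    int (length (filter (\<lambda>e. fst (D e) \<in> Z \<and> snd (D e) \<notin> Z) es))
    - int (length (filter (\<lambda>e. snd (D e) \<in> Z \<and> fst (D e) \<notin> Z) es))
    = of_bool (a \<in> Z) - of_bool (b \<in> Z)"
proof (induction es arbitrary: a)
  case (Cons e es)
  then have "walk E D (snd (D e)) es b" "fst (D e) = a" by auto
  with Cons.IH[OF this(1)] show ?case by (auto simp: of_bool_def)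
qed simp

definition reorient :: "'e set \<Rightarrow> ('e \<Rightarrow> 'v \<times> 'v) \<Rightarrow> 'e \<Rightarrow> 'v \<times> 'v" where
  "reorient P D e = (if e \<in> P then prod.swap (D e) else D e)"

lemma is_orientation_reorient: "is_orientation E ep D \<Longrightarrow> is_orientation E ep (reorient P D)"
  by (auto simp: is_orientation_def reorient_def)

lemma card_reorient:
  assumes "finite E" "P \<subseteq> E"
  shows "card {e \<in> E. Q (reorient P D e)} + card {e \<in> P. Q (D e)}
       = card {e \<in> E. Q (D e)} + card {e \<in> P. Q (prod.swap (D e))}"
proof -
  have split: "card {e \<in> E. R e} = card {e \<in> E - P. R e} + card {e \<in> P. R e}" for R
  proof -
    have "{e \<in> E. R e} = {e \<in> E - P. R e} \<union> {e \<in> P. R e}" using assms(2) by blast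
    moreover have "finite P" using assms finite_subset by blast
    ultimately show ?thesis using assms(1) by (simp add: card_Un_disjoint disjoint_iff)
  qed
  have "{e \<in> E - P. Q (reorient P D e)} = {e \<in> E - P. Q (D e)}"
    and "{e \<in> P. Q (reorient P D e)} = {e \<in> P. Q (prod.swap (D e))}"
    by (auto simp: reorient_def)
  then show ?thesis using split[of "\<lambda>e. Q (reorient P D e)"] split[of "\<lambda>e. Q (D e)"] by simp
qed

lemma reorient_distinct_walk:
  assumes "finite E" "walk E D v es u" "distinct es"
  shows "int (indeg E (reorient (set es) D) w)
         = int (indeg E D w) - of_bool (w = u) + of_bool (w = v)"
    and "int (indeg_set E (reorient (set es) D) Z)
         = int (indeg_set E D Z) - of_bool (u \<in> Z) + of_bool (v \<in> Z)"
proof -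
  have P: "set es \<subseteq> E" by (rule walk_subset[OF assms(2)])
  have count: "card {e \<in> set es. R e} = length (filter R es)" for R
    using distinct_length_filter[OF assms(3), of R] by (simp add: Collect_conj_eq Int_commute)
  show "int (indeg E (reorient (set es) D) w)
         = int (indeg E D w) - of_bool (w = u) + of_bool (w = v)"
    using card_reorient[OF assms(1) P, of "\<lambda>x. snd x = w" D] walk_indeg_balance[OF assms(2), of w]
    unfolding indeg_def count by simp
  show "int (indeg_set E (reorient (set es) D) Z)
         = int (indeg_set E D Z) - of_bool (u \<in> Z) + of_bool (v \<in> Z)"
    using card_reorient[OF assms(1) P, of "\<lambda>x. snd x \<in> Z \<and> fst x \<notin> Z" D]
      walk_cut_balance[OF assms(2), of Z]
    unfolding indeg_set_def count by simp
qed

text \<open>Reversing a path from v to u lowers the in-degree of every set that contains u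
  but not v by one, so it preserves strong connectivity unless such a set is tight.\<close>

lemma strong_unit_shift_if_no_separating_tight:
  assumes G: "ugraph V E ep" and D: "D \<in> strong_orientations V E ep"
    and "u \<in> V" "v \<in> V" "u \<noteq> v"
    and no_sep: "\<And>A. tight V E D A \<Longrightarrow> u \<in> A \<Longrightarrow> v \<in> A"
  shows "\<exists>D'\<in>strong_orientations V E ep. unit_shift (indeg E D) u v (indeg E D')"
proof -
  have fE: "finite E" using G by (simp add: ugraph_def)
  have O: "is_orientation E ep D" and S: "strongly_connected V E D"
    using D by (auto simp: strong_orientations_def)
  have "(v, u) \<in> (arcs E D)\<^sup>*" using S assms(3,4) by (simp add: strongly_connected_def)
  then obtain es where w: "walk E D v es u" "distinct es" by (rule rtrancl_arcs_imp_distinct_walk)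
  define D' where "D' = reorient (set es) D"
  have O': "is_orientation E ep D'" unfolding D'_def using O by (rule is_orientation_reorient)
  have "indeg_set E D' Z \<noteq> 0" if "Z \<noteq> {}" "Z \<subset> V" for Z
  proof -
    have "indeg_set E D Z \<noteq> 0" using S that strongly_connected_iff_indeg_set[OF G O] by blast
    moreover have "indeg_set E D Z \<noteq> 1" if "u \<in> Z" "v \<notin> Z"
      using no_sep[of Z] \<open>Z \<noteq> {}\<close> \<open>Z \<subset> V\<close> that by (auto simp: tight_def)
    ultimately show ?thesis
      using reorient_distinct_walk(2)[OF fE w, of Z] unfolding D'_def
      by (cases "u \<in> Z"; cases "v \<in> Z") auto
  qed
  then have "D' \<in> strong_orientations V E ep"
    using O' strongly_connected_iff_indeg_set[OF G O'] by (simp add: strong_orientations_def)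
  moreover have "unit_shift (indeg E D) u v (indeg E D')"
    using assms(5) reorient_distinct_walk(1)[OF fE w] unfolding D'_def by (rule unit_shiftI)
  ultimately show ?thesis by blast
qed

section \<open>Exchanging in-degree between strong orientations\<close>

lemma union_closed_family_maximal_cover:
  assumes "finite F" and closed: "\<forall>X\<in>F. \<forall>Y\<in>F. X \<inter> Y \<noteq> {} \<longrightarrow> X \<union> Y \<in> F"
  defines "G \<equiv> {X \<in> F. \<forall>Y\<in>F. X \<subseteq> Y \<longrightarrow> X = Y}"
  shows "G \<subseteq> F" and "\<forall>X\<in>G. \<forall>Y\<in>G. X \<noteq> Y \<longrightarrow> X \<inter> Y = {}" and "\<Union>G = \<Union>F"
proof -
  show sub: "G \<subseteq> F" unfolding G_def by blast
  show "\<forall>X\<in>G. \<forall>Y\<in>G. X \<noteq> Y \<longrightarrow> X \<inter> Y = {}"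
  proof (intro ballI impI)
    fix X Y assume XY: "X \<in> G" "Y \<in> G" "X \<noteq> Y"
    show "X \<inter> Y = {}"
    proof (rule ccontr)
      assume "X \<inter> Y \<noteq> {}"
      with XY(1,2) sub closed have "X \<union> Y \<in> F" by blast
      moreover have "\<forall>Z\<in>F. X \<subseteq> Z \<longrightarrow> X = Z" "\<forall>Z\<in>F. Y \<subseteq> Z \<longrightarrow> Y = Z"
        using XY(1,2) by (simp_all add: G_def)
      ultimately have "X = X \<union> Y" "Y = X \<union> Y" by (simp_all add: Un_upper1 Un_upper2)
      with XY(3) show False by simp
    qed
  qed
  have "\<exists>M\<in>G. X \<subseteq> M" if "X \<in> F" for X
    using finite_has_maximal2[OF assms(1) that] unfolding G_def by blast
  then show "\<Union>G = \<Union>F" using sub by blast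
qed

lemma sum_indeg_compl_tight_le:
  assumes G: "ugraph V E ep"
    and D1: "D1 \<in> strong_orientations V E ep" and D2: "D2 \<in> strong_orientations V E ep"
    and "tight V E D1 A"
  shows "(\<Sum>w\<in>V - A. indeg E D2 w) \<le> (\<Sum>w\<in>V - A. indeg E D1 w)"
proof -
  have O1: "is_orientation E ep D1" and O2: "is_orientation E ep D2"
    and S2: "strongly_connected V E D2"
    using D1 D2 by (auto simp: strong_orientations_def)
  have A: "A \<noteq> {}" "A \<subset> V" "indeg_set E D1 A = 1" using assms(4) by (simp_all add: tight_def)
  then have "indeg_set E D2 A \<noteq> 0" using S2 strongly_connected_iff_indeg_set[OF G O2] by blast
  with A(3) have "indeg_set E D1 A \<le> indeg_set E D2 A" by simp
  moreover have "finite E" "finite A"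
    using G A(2) by (auto simp: ugraph_def intro: finite_subset)
  ultimately have "(\<Sum>w\<in>A. indeg E D1 w) \<le> (\<Sum>w\<in>A. indeg E D2 w)"
    using O1 O2 by (intro sum_indeg_le_if_indeg_set_le)
  then show ?thesis using A(2) sum_indeg_le_iff_compl[OF G O1 O2, of A] by simp
qed

definition tight_hull :: "'v set \<Rightarrow> 'e set \<Rightarrow> ('e \<Rightarrow> 'v \<times> 'v) \<Rightarrow> 'v \<Rightarrow> 'v set" where
  "tight_hull V E D u = {w \<in> V. \<forall>A. tight V E D A \<longrightarrow> u \<in> A \<longrightarrow> w \<in> A}"

text \<open>The complements of the tight sets containing u cover the vertices outside the
  hull, and their maximal members cover them disjointly; on each of these D2 carries no
  more in-degree than D1.\<close>

lemma sum_indeg_tight_hull_le: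
  assumes G: "ugraph V E ep"
    and D1: "D1 \<in> strong_orientations V E ep" and D2: "D2 \<in> strong_orientations V E ep"
  shows "(\<Sum>w\<in>tight_hull V E D1 u. indeg E D1 w) \<le> (\<Sum>w\<in>tight_hull V E D1 u. indeg E D2 w)"
proof -
  define T where "T = tight_hull V E D1 u"
  have fV: "finite V" using G by (simp add: ugraph_def)
  have O1: "is_orientation E ep D1" and O2: "is_orientation E ep D2"
    using D1 D2 by (auto simp: strong_orientations_def)
  define F where "F = (\<lambda>A. V - A) ` {A. tight V E D1 A \<and> u \<in> A}"
  have "finite F" unfolding F_def
    by (rule finite_imageI, rule finite_subset[of _ "Pow V"]) (use fV in \<open>auto simp: tight_def\<close>)
  have closed: "\<forall>X\<in>F. \<forall>Y\<in>F. X \<inter> Y \<noteq> {} \<longrightarrow> X \<union> Y \<in> F"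
  proof (intro ballI impI)
    fix X Y assume XY: "X \<in> F" "Y \<in> F" "X \<inter> Y \<noteq> {}"
    obtain A B where A: "tight V E D1 A" "u \<in> A" "X = V - A"
      and B: "tight V E D1 B" "u \<in> B" "Y = V - B"
      using XY(1,2) unfolding F_def by blast
    have "tight V E D1 (A \<inter> B)"
      using tight_Int[OF G D1 A(1) B(1)] A B XY(3) by blast
    moreover have "X \<union> Y = V - (A \<inter> B)" using A(3) B(3) by blast
    ultimately show "X \<union> Y \<in> F" using A(2) B(2) unfolding F_def by blast
  qed
  define \<G> where "\<G> = {X \<in> F. \<forall>Y\<in>F. X \<subseteq> Y \<longrightarrow> X = Y}"
  note \<G> = union_closed_family_maximal_cover[OF \<open>finite F\<close> closed, folded \<G>_def]
  have "\<Union>F = V - T" by (auto simp: F_def T_def tight_hull_def)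
  then have union: "V - T = \<Union>\<G>" using \<G>(3) by simp
  have fin: "\<forall>X\<in>\<G>. finite X" using \<G>(1) fV unfolding F_def by auto
  have compl_le: "(\<Sum>w\<in>X. indeg E D2 w) \<le> (\<Sum>w\<in>X. indeg E D1 w)" if "X \<in> \<G>" for X
    using that \<G>(1) sum_indeg_compl_tight_le[OF G D1 D2] unfolding F_def by blast
  have "(\<Sum>w\<in>V - T. indeg E D2 w) = (\<Sum>X\<in>\<G>. \<Sum>w\<in>X. indeg E D2 w)"
    unfolding union using fin \<G>(2) by (simp add: sum.Union_disjoint)
  also have "\<dots> \<le> (\<Sum>X\<in>\<G>. \<Sum>w\<in>X. indeg E D1 w)" by (rule sum_mono) (rule compl_le)
  also have "\<dots> = (\<Sum>w\<in>V - T. indeg E D1 w)"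
    unfolding union using fin \<G>(2) by (simp add: sum.Union_disjoint)
  finally have "(\<Sum>w\<in>V - T. indeg E D2 w) \<le> (\<Sum>w\<in>V - T. indeg E D1 w)" .
  moreover have "T \<subseteq> V" by (auto simp: T_def tight_hull_def)
  ultimately show ?thesis using sum_indeg_le_iff_compl[OF G O1 O2, of T] T_def by simp
qed

lemma strong_orientation_exchange:
  assumes G: "ugraph V E ep"
    and D1: "D1 \<in> strong_orientations V E ep" and D2: "D2 \<in> strong_orientations V E ep"
    and "u \<in> V" "indeg E D2 u < indeg E D1 u"
  shows "\<exists>v\<in>V. indeg E D1 v < indeg E D2 v \<and>
           (\<exists>D'\<in>strong_orientations V E ep. unit_shift (indeg E D1) u v (indeg E D'))"
proof -
  define T where "T = tight_hull V E D1 u"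
  have fT: "finite T" using G by (auto simp: T_def tight_hull_def ugraph_def)
  have "u \<in> T" using assms(4) by (simp add: T_def tight_hull_def)
  have "\<exists>v\<in>T. indeg E D1 v < indeg E D2 v"
  proof (rule ccontr)
    assume "\<not> ?thesis"
    then have "(\<Sum>w\<in>T. indeg E D2 w) < (\<Sum>w\<in>T. indeg E D1 w)"
      using \<open>u \<in> T\<close> assms(5) by (intro sum_strict_mono_ex1[OF fT]) auto
    then show False using sum_indeg_tight_hull_le[OF G D1 D2, of u] by (simp add: T_def)
  qed
  then obtain v where "v \<in> T" "indeg E D1 v < indeg E D2 v" by blast
  moreover have "u \<noteq> v" using calculation(2) assms(5) by auto
  ultimately show ?thesis
    using strong_unit_shift_if_no_separating_tight[OF G D1 assms(4), of v]
    by (auto simp: T_def tight_hull_def)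
qed

section \<open>Locally balanced orientations\<close>

definition locally_balanced ::
  "'v set \<Rightarrow> 'e set \<Rightarrow> ('e \<Rightarrow> 'v \<times> 'v) \<Rightarrow> ('e \<Rightarrow> 'v \<times> 'v) \<Rightarrow> bool" where
  "locally_balanced V E ep D \<longleftrightarrow>
     (\<forall>D'\<in>strong_orientations V E ep. \<forall>a\<in>V. \<forall>b\<in>V.
        unit_shift (indeg E D) a b (indeg E D') \<longrightarrow> indeg E D a \<le> indeg E D b + 1)"

lemma dec_min_imp_locally_balanced:
  assumes "finite V" "dec_min V E (strong_orientations V E ep) D"
  shows "locally_balanced V E ep D"
  unfolding locally_balanced_def
proof (intro ballI impI)
  fix D' a b
  assume D': "D' \<in> strong_orientations V E ep" and "a \<in> V" "b \<in> V"
    and shift: "unit_shift (indeg E D) a b (indeg E D')"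
  show "indeg E D a \<le> indeg E D b + 1"
  proof (rule ccontr)
    assume "\<not> ?thesis"
    then have "lex_less (indeg_dec V E D') (indeg_dec V E D)"
      using indeg_unit_shift_lex_less(2)[OF assms(1) \<open>a \<in> V\<close> \<open>b \<in> V\<close> shift] by simp
    moreover have "lex_le (indeg_dec V E D) (indeg_dec V E D')"
      using assms(2) D' by (simp add: dec_min_def)
    ultimately show False by (auto dest: lex_less_not_lex_le)
  qed
qed

lemma inc_max_imp_locally_balanced:
  assumes "finite V" "inc_max V E (strong_orientations V E ep) D"
  shows "locally_balanced V E ep D"
  unfolding locally_balanced_def
proof (intro ballI impI)
  fix D' a b
  assume D': "D' \<in> strong_orientations V E ep" and "a \<in> V" "b \<in> V"
    and shift: "unit_shift (indeg E D) a b (indeg E D')"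
  show "indeg E D a \<le> indeg E D b + 1"
  proof (rule ccontr)
    assume "\<not> ?thesis"
    then have "lex_less (indeg_inc V E D) (indeg_inc V E D')"
      using indeg_unit_shift_lex_less(1)[OF assms(1) \<open>a \<in> V\<close> \<open>b \<in> V\<close> shift] by simp
    moreover have "lex_le (indeg_inc V E D') (indeg_inc V E D)"
      using assms(2) D' by (simp add: inc_max_def)
    ultimately show False by (auto dest: lex_less_not_lex_le)
  qed
qed

text \<open>D2 is moved one step towards D1 by shifting a unit of in-degree from a vertex v
  where D2 exceeds D1 most to a vertex u where it falls short; local balance of D1 forces
  the in-degree of v in D2 to exceed that of u, so the shift does not worsen D2.\<close>

lemma locally_balanced_approach:
  assumes G: "ugraph V E ep" and D1: "D1 \<in> strong_orientations V E ep"
    and bal: "locally_balanced V E ep D1" and D2: "D2 \<in> strong_orientations V E ep"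
    and "w \<in> V" "indeg E D1 w < indeg E D2 w"
  obtains D2' where "D2' \<in> strong_orientations V E ep"
    "(\<Sum>x\<in>V. indeg E D2' x - indeg E D1 x) < (\<Sum>x\<in>V. indeg E D2 x - indeg E D1 x)"
    "lex_le (indeg_dec V E D2') (indeg_dec V E D2)" "lex_le (indeg_inc V E D2) (indeg_inc V E D2')"
proof -
  have fV: "finite V" using G by (simp add: ugraph_def)
  define S where "S = {x \<in> V. indeg E D1 x < indeg E D2 x}"
  have fS: "finite S" using fV by (simp add: S_def)
  have "Max (indeg E D2 ` S) \<in> indeg E D2 ` S"
    using fS assms(5,6) by (intro Max_in) (auto simp: S_def)
  then obtain v where "v \<in> S" "indeg E D2 v = Max (indeg E D2 ` S)" by (metis imageE)
  then have v_max: "indeg E D2 x \<le> indeg E D2 v" if "x \<in> S" for x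
    using fS that by simp
  have v: "v \<in> V" "indeg E D1 v < indeg E D2 v" using \<open>v \<in> S\<close> by (auto simp: S_def)
  obtain u D2' where u: "u \<in> V" "indeg E D2 u < indeg E D1 u"
    and D2': "D2' \<in> strong_orientations V E ep"
    and shift: "unit_shift (indeg E D2) v u (indeg E D2')"
    using strong_orientation_exchange[OF G D2 D1 v] by blast
  have gap: "indeg E D2 u + 1 \<le> indeg E D2 v"
  proof (rule ccontr)
    assume small: "\<not> ?thesis"
    obtain v' D1' where v': "v' \<in> V" "indeg E D1 v' < indeg E D2 v'"
      and D1': "D1' \<in> strong_orientations V E ep" "unit_shift (indeg E D1) u v' (indeg E D1')"
      using strong_orientation_exchange[OF G D1 D2 u] by blast
    have "indeg E D1 u \<le> indeg E D1 v' + 1"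
      using bal D1' u(1) v'(1) unfolding locally_balanced_def by blast
    moreover have "indeg E D2 v' \<le> indeg E D2 v" using v' v_max by (simp add: S_def)
    ultimately show False using small u(2) v'(2) by linarith
  qed
  show thesis
    using sum_diff_unit_shift_less[OF fV v(1) shift v(2) u(2)]
      indeg_unit_shift_lex_le[OF fV v(1) u(1) shift gap]
    by (intro that[OF D2']) auto
qed

lemma locally_balanced_imp_optimal:
  assumes G: "ugraph V E ep" and D1: "D1 \<in> strong_orientations V E ep"
    and bal: "locally_balanced V E ep D1" and "D2 \<in> strong_orientations V E ep"
  shows "lex_le (indeg_dec V E D1) (indeg_dec V E D2)
    \<and> lex_le (indeg_inc V E D2) (indeg_inc V E D1)"
  using assms(4)
proof (induction "\<Sum>x\<in>V. indeg E D2 x - indeg E D1 x" arbitrary: D2 rule: less_induct)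
  case less
  show ?case
  proof (cases "\<exists>w\<in>V. indeg E D1 w < indeg E D2 w")
    case True
    then obtain w where "w \<in> V" "indeg E D1 w < indeg E D2 w" by blast
    then obtain D2' where D2': "D2' \<in> strong_orientations V E ep"
      and closer: "(\<Sum>x\<in>V. indeg E D2' x - indeg E D1 x) < (\<Sum>x\<in>V. indeg E D2 x - indeg E D1 x)"
      and step: "lex_le (indeg_dec V E D2') (indeg_dec V E D2)"
        "lex_le (indeg_inc V E D2) (indeg_inc V E D2')"
      by (rule locally_balanced_approach[OF G D1 bal less.prems])
    have "lex_le (indeg_dec V E D1) (indeg_dec V E D2')
      \<and> lex_le (indeg_inc V E D2') (indeg_inc V E D1)"
      by (rule less.hyps[OF closer D2'])
    then show ?thesis using step lex_le_trans by blast
  next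
    case False
    have fV: "finite V" using G by (simp add: ugraph_def)
    have eq: "(\<Sum>x\<in>V. indeg E D2 x) = (\<Sum>x\<in>V. indeg E D1 x)"
      using D1 less.prems sum_indeg_total[OF G] by (simp add: strong_orientations_def)
    have le: "indeg E D2 x \<le> indeg E D1 x" if "x \<in> V" for x
      using False that by (simp add: not_less)
    have "indeg E D2 x = indeg E D1 x" if "x \<in> V" for x
      by (rule sum_mono_inv[OF eq le that fV])
    then have "image_mset (indeg E D2) (mset_set V) = image_mset (indeg E D1) (mset_set V)"
      using fV by (intro image_mset_cong) simp
    then have "indeg_inc V E D2 = indeg_inc V E D1" by (simp add: indeg_inc_def)
    then show ?thesis by (simp add: lex_le_def indeg_dec_def)
  qed
qed

lemma dec_min_iff_locally_balanced:
  assumes "ugraph V E ep" "D \<in> strong_orientations V E ep"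
  shows "dec_min V E (strong_orientations V E ep) D \<longleftrightarrow> locally_balanced V E ep D"
proof
  show "dec_min V E (strong_orientations V E ep) D \<Longrightarrow> locally_balanced V E ep D"
    using assms(1) by (intro dec_min_imp_locally_balanced) (simp_all add: ugraph_def)
  show "locally_balanced V E ep D \<Longrightarrow> dec_min V E (strong_orientations V E ep) D"
    using assms locally_balanced_imp_optimal unfolding dec_min_def by blast
qed

lemma inc_max_iff_locally_balanced:
  assumes "ugraph V E ep" "D \<in> strong_orientations V E ep"
  shows "inc_max V E (strong_orientations V E ep) D \<longleftrightarrow> locally_balanced V E ep D"
proof
  show "inc_max V E (strong_orientations V E ep) D \<Longrightarrow> locally_balanced V E ep D"
    using assms(1) by (intro inc_max_imp_locally_balanced) (simp_all add: ugraph_def)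
  show "locally_balanced V E ep D \<Longrightarrow> inc_max V E (strong_orientations V E ep) D"
    using assms locally_balanced_imp_optimal unfolding inc_max_def by blast
qed

theorem corollary6p4:
  fixes V :: "'v set" and E :: "'e set" and ep :: "'e \<Rightarrow> 'v \<times> 'v"
    and D :: "'e \<Rightarrow> 'v \<times> 'v"
  assumes "ugraph V E ep"
    and "strong_orientations V E ep \<noteq> {}"
    and "D \<in> strong_orientations V E ep"
  shows "dec_min V E (strong_orientations V E ep) D \<longleftrightarrow>
         inc_max V E (strong_orientations V E ep) D"
  using dec_min_iff_locally_balanced[OF assms(1,3)] inc_max_iff_locally_balanced[OF assms(1,3)]
  by simp

end
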